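(* Assume $|\mathcal S|\ge2$, let $\epsilon,\delta>0$, let $\mathcal V_j\in\mathcal S$, and set $$r^b_{max}=\frac{\epsilon\delta}{\max_{\mathcal V_i\in\mathcal S\setminus\{\mathcal V_j\}}\frac{1}{|F(\mathcal V_i)|}\sum_{v_s\in F(\mathcal V_i)}d(v_s)}.$$ Then GBP$(G,\mathcal S,\mathcal V_j,r^b_{max})$ terminates, and its output $\hat\pi_d(\mathcal V_i,\mathcal V_j)$ is an $(\epsilon,\delta)$-approximation of $\pi_d(\mathcal V_i,\mathcal V_j)$ for every $\mathcal V_i\in\mathcal S$ with $\mathcal V_i\ne\mathcal V_j$.
   Context: $G=(V,E)$ is a directed graph with $n$ nodes and $m$ edges, no self-loops, and every node of out-degree $d(v)\ge1$; $\alpha\in(0,1)$. PPR $\pi(u,v)$: probability that a random walk from $u$ which at each step stops with probability $\alpha$ and otherwise moves to a uniformly random out-neighbor stops at $v$; $\pi_d(u,v)=d(u)\pi(u,v)$. A collection $\mathcal S=\{\mathcal V_1,\dots,\mathcal V_k\}$ of supernodes is given, each $\mathcal V_i$ having a nonempty leaf set $F(\mathcal V_i)\subseteq V$, the leaf sets being pairwise disjoint. For supernodes, $\pi_d(\mathcal V_i,\mathcal V_j)=\frac{1}{|F(\mathcal V_i)||F(\mathcal V_j)|}\sum_{v_s\in F(\mathcal V_i),v_t\in F(\mathcal V_j)}\pi_d(v_s,v_t)$. A value $\hat x$ is an $(\epsilon,\delta)$-approximation of $x\ge0$ if $|\hat x-x|\le\epsilon\delta$ when $x<\delta$, and $|\hat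 x-x|\le\epsilon x$ when $x\ge\delta$. Procedure GBP$(G,\mathcal S,\mathcal V_j,r^b_{max})$: set $\hat\pi_d(\mathcal V_i,\mathcal V_j)=0$ for all $\mathcal V_i\in\mathcal S$; set $r(v,\mathcal V_j)=1/|F(\mathcal V_j)|$ for $v\in F(\mathcal V_j)$ and $0$ otherwise. While some $v_k\in V$ has $r(v_k,\mathcal V_j)>r^b_{max}$, pick any such $v_k$ and: if $v_k\in F(\mathcal V_i)$ for some $\mathcal V_i\in\mathcal S$, add $\alpha\,d(v_k)\,r(v_k,\mathcal V_j)/|F(\mathcal V_i)|$ to $\hat\pi_d(\mathcal V_i,\mathcal V_j)$; for each in-neighbor $v_i$ of $v_k$ add $(1-\alpha)\,r(v_k,\mathcal V_j)/d(v_i)$ to $r(v_i,\mathcal V_j)$; then set $r(v_k,\mathcal V_j)=0$. Output the values $\hat\pi_d(\cdot,\mathcal V_j)$. *)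

theory Defs
  imports Complex_Main
begin

definition out_nbrs :: "('a \<times> 'a) set \<Rightarrow> 'a \<Rightarrow> 'a set" where
  "out_nbrs E u = {w. (u, w) \<in> E}"

definition outdeg :: "('a \<times> 'a) set \<Rightarrow> 'a \<Rightarrow> nat" where
  "outdeg E u = card (out_nbrs E u)"

definition graph_ok :: "'a set \<Rightarrow> ('a \<times> 'a) set \<Rightarrow> bool" where
  "graph_ok V E \<longleftrightarrow> finite V \<and> E \<subseteq> V \<times> V \<and> (\<forall>v. (v, v) \<notin> E)
     \<and> (\<forall>v\<in>V. outdeg E v \<ge> 1)"

fun walk_prob :: "('a \<times> 'a) set \<Rightarrow> nat \<Rightarrow> 'a \<Rightarrow> 'a \<Rightarrow> real" where
  "walk_prob E 0 u v = (if u = v then 1 else 0)"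
| "walk_prob E (Suc k) u v =
     (\<Sum>w\<in>out_nbrs E u. walk_prob E k w v / real (outdeg E u))"

text \<open>PPR: probability that the alpha-terminated walk from u stops at v
  (stops after exactly k moves with probability alpha (1-alpha)^k).\<close>
definition ppr :: "('a \<times> 'a) set \<Rightarrow> real \<Rightarrow> 'a \<Rightarrow> 'a \<Rightarrow> real" where
  "ppr E \<alpha> u v = (\<Sum>k. \<alpha> * (1 - \<alpha>) ^ k * walk_prob E k u v)"

definition ppr_d :: "('a \<times> 'a) set \<Rightarrow> real \<Rightarrow> 'a \<Rightarrow> 'a \<Rightarrow> real" where
  "ppr_d E \<alpha> u v = real (outdeg E u) * ppr E \<alpha> u v"

definition super_ok :: "'a set \<Rightarrow> 's set \<Rightarrow> ('s \<Rightarrow> 'a set) \<Rightarrow> bool" where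
  "super_ok V S F \<longleftrightarrow> finite S \<and> (\<forall>i\<in>S. F i \<noteq> {} \<and> F i \<subseteq> V)
     \<and> (\<forall>i\<in>S. \<forall>i'\<in>S. i \<noteq> i' \<longrightarrow> F i \<inter> F i' = {})"

definition ppr_d_super :: "('a \<times> 'a) set \<Rightarrow> real \<Rightarrow> ('s \<Rightarrow> 'a set) \<Rightarrow> 's \<Rightarrow> 's \<Rightarrow> real" where
  "ppr_d_super E \<alpha> F i j =
     (\<Sum>vs\<in>F i. \<Sum>vt\<in>F j. ppr_d E \<alpha> vs vt) / (real (card (F i)) * real (card (F j)))"

definition eps_delta_approx :: "real \<Rightarrow> real \<Rightarrow> real \<Rightarrow> real \<Rightarrow> bool" where
  "eps_delta_approx \<epsilon> \<delta> xhat x \<longleftrightarrow>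
     (x < \<delta> \<longrightarrow> \<bar>xhat - x\<bar> \<le> \<epsilon> * \<delta>) \<and> (x \<ge> \<delta> \<longrightarrow> \<bar>xhat - x\<bar> \<le> \<epsilon> * x)"

text \<open>GBP as a (nondeterministic) transition system on states (pihat, r).\<close>
definition gbp_init :: "('s \<Rightarrow> 'a set) \<Rightarrow> 's \<Rightarrow> ('s \<Rightarrow> real) \<times> ('a \<Rightarrow> real)" where
  "gbp_init F j = ((\<lambda>i. 0), (\<lambda>v. if v \<in> F j then 1 / real (card (F j)) else 0))"

definition gbp_step :: "'a set \<Rightarrow> ('a \<times> 'a) set \<Rightarrow> 's set \<Rightarrow> ('s \<Rightarrow> 'a set) \<Rightarrow> real \<Rightarrow> real
    \<Rightarrow> ('s \<Rightarrow> real) \<times> ('a \<Rightarrow> real) \<Rightarrow> ('s \<Rightarrow> real) \<times> ('a \<Rightarrow> real) \<Rightarrow> bool" where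
  "gbp_step V E S F \<alpha> rmax st st' \<longleftrightarrow>
     (\<exists>vk\<in>V. snd st vk > rmax \<and>
        st' = ((\<lambda>i. if i \<in> S \<and> vk \<in> F i
                     then fst st i + \<alpha> * real (outdeg E vk) * snd st vk / real (card (F i))
                     else fst st i),
               (\<lambda>v. if v = vk then 0
                    else snd st v + (if (v, vk) \<in> E
                                     then (1 - \<alpha>) * snd st vk / real (outdeg E v) else 0))))"

definition gbp_terminal :: "'a set \<Rightarrow> real \<Rightarrow> ('s \<Rightarrow> real) \<times> ('a \<Rightarrow> real) \<Rightarrow> bool" where
  "gbp_terminal V rmax st \<longleftrightarrow> \<not> (\<exists>v\<in>V. snd st v > rmax)"

end

theory Submission imports Defs begin

text \<open>Write m(r, s) = \<Sum>v. \<pi>_d(s, v) r(v) for the residual-weighted PPR mass at s.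
  Since \<pi>_d satisfies the last-step equation
  \<pi>_d(s, v) = \<alpha> d(s) [s = v] + (1 - \<alpha>) \<Sum>w. \<pi>_d(s, w) P(w, v),
  pushing the residual of v_k lowers m(r, s) by exactly \<alpha> d(v_k) r(v_k) [s = v_k], which is
  what GBP adds to the estimate.  Hence for every supernode V_i throughout the run
  |F(V_i)| \<pi>_d(V_i, V_j) = |F(V_i)| pihat(V_i) + \<Sum>s\<in>F(V_i). m(r, s).
  At termination all residuals lie in [0, r_max] and \<Sum>v. \<pi>(s, v) \<le> 1, so the estimate
  undershoots by at most r_max times the average out-degree on F(V_i), i.e. by at most \<epsilon>\<delta>.
  For termination, the total mass \<Sum>u. m(r, u) is nonnegative and drops by
  \<alpha> d(v_k) r(v_k) > \<alpha> r_max with every push.\<close>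

definition trans_prob :: "('a \<times> 'a) set \<Rightarrow> 'a \<Rightarrow> 'a \<Rightarrow> real" where
  "trans_prob E w v = (if (w, v) \<in> E then 1 / real (outdeg E w) else 0)"

lemma finite_out_nbrs: "finite V \<Longrightarrow> E \<subseteq> V \<times> V \<Longrightarrow> finite (out_nbrs E u)"
  by (rule finite_subset[of _ V]) (auto simp: out_nbrs_def)

lemma sum_inverse_outdeg_le_1: "(\<Sum>w\<in>out_nbrs E u. 1 / real (outdeg E u)) \<le> 1"
  by (cases "outdeg E u = 0") (auto simp: outdeg_def)

lemma walk_prob_nonneg: "0 \<le> walk_prob E k u v"
  by (induction k arbitrary: u) (auto intro!: sum_nonneg divide_nonneg_nonneg)

lemma walk_prob_le_1: "walk_prob E k u v \<le> 1"
proof (induction k arbitrary: u)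
  case (Suc k)
  have "walk_prob E (Suc k) u v \<le> (\<Sum>w\<in>out_nbrs E u. 1 / real (outdeg E u))"
    unfolding walk_prob.simps by (intro sum_mono divide_right_mono) (auto simp: Suc)
  also have "\<dots> \<le> 1" by (rule sum_inverse_outdeg_le_1)
  finally show ?case .
qed simp

lemma sum_walk_prob_le_1:
  assumes "finite V" "E \<subseteq> V \<times> V"
  shows "(\<Sum>v\<in>V. walk_prob E k u v) \<le> 1"
proof (induction k arbitrary: u)
  case 0
  show ?case using assms by (cases "u \<in> V") auto
next
  case (Suc k)
  have "(\<Sum>v\<in>V. walk_prob E (Suc k) u v)
      = (\<Sum>w\<in>out_nbrs E u. (\<Sum>v\<in>V. walk_prob E k w v) / real (outdeg E u))"
    by (simp add: sum.swap[of _ V] sum_divide_distrib)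
  also have "\<dots> \<le> (\<Sum>w\<in>out_nbrs E u. 1 / real (outdeg E u))"
    by (intro sum_mono divide_right_mono) (auto simp: Suc)
  also have "\<dots> \<le> 1" by (rule sum_inverse_outdeg_le_1)
  finally show ?case .
qed

lemma walk_prob_Suc_last_step:
  assumes "finite V" "E \<subseteq> V \<times> V"
  shows "walk_prob E (Suc k) s v = (\<Sum>w\<in>V. walk_prob E k s w * trans_prob E w v)"
proof (induction k arbitrary: s)
  case 0
  have "walk_prob E (Suc 0) s v = (if v \<in> out_nbrs E s then 1 / real (outdeg E s) else 0)"
    using finite_out_nbrs[OF assms] by (simp add: if_distrib[where f="\<lambda>x. x / _"] cong: if_cong)
  also have "\<dots> = (\<Sum>w\<in>V. walk_prob E 0 s w * trans_prob E w v)"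
    using assms
    by (auto simp: trans_prob_def out_nbrs_def if_distrib[where f="\<lambda>x. x * _"] cong: if_cong)
  finally show ?case .
next
  case (Suc k)
  have "walk_prob E (Suc (Suc k)) s v
      = (\<Sum>w\<in>out_nbrs E s. (\<Sum>x\<in>V. walk_prob E k w x * trans_prob E x v) / real (outdeg E s))"
    by (subst walk_prob.simps(2)) (simp only: Suc)
  also have "\<dots> = (\<Sum>x\<in>V. walk_prob E (Suc k) s x * trans_prob E x v)"
    by (simp add: sum_divide_distrib sum_distrib_right sum.swap[of _ V])
  finally show ?case .
qed

lemma stopping_time_sums: "0 < \<alpha> \<Longrightarrow> \<alpha> < 1 \<Longrightarrow> (\<lambda>k. \<alpha> * (1 - \<alpha>) ^ k) sums (1::real)"
  using sums_mult[OF geometric_sums[of "1 - \<alpha>"], of \<alpha>] by simp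

lemma ppr_sums:
  assumes "0 < \<alpha>" "\<alpha> < 1"
  shows "(\<lambda>k. \<alpha> * (1 - \<alpha>) ^ k * walk_prob E k u v) sums ppr E \<alpha> u v"
proof -
  have "summable (\<lambda>k. \<alpha> * (1 - \<alpha>) ^ k * walk_prob E k u v)"
  proof (rule summable_comparison_test)
    show "\<exists>N. \<forall>n\<ge>N. norm (\<alpha> * (1 - \<alpha>) ^ n * walk_prob E n u v) \<le> \<alpha> * (1 - \<alpha>) ^ n"
      using assms walk_prob_nonneg[of E] walk_prob_le_1[of E]
      by (intro exI[of _ 0] allI impI) (simp add: abs_mult mult_left_le)
    show "summable (\<lambda>k. \<alpha> * (1 - \<alpha>) ^ k)"
      using stopping_time_sums[OF assms] by (rule sums_summable)
  qed
  then show ?thesis unfolding ppr_def by (rule summable_sums)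
qed

lemma ppr_nonneg: "0 < \<alpha> \<Longrightarrow> \<alpha> < 1 \<Longrightarrow> 0 \<le> ppr E \<alpha> u v"
  by (rule sums_le[OF _ sums_zero ppr_sums]) (simp_all add: walk_prob_nonneg)

lemma sum_ppr_le_1:
  assumes "finite V" "E \<subseteq> V \<times> V" "0 < \<alpha>" "\<alpha> < 1"
  shows "(\<Sum>v\<in>V. ppr E \<alpha> u v) \<le> 1"
proof (rule sums_le[OF _ sums_sum[OF ppr_sums[OF assms(3,4)]] stopping_time_sums[OF assms(3,4)]])
  fix k
  have "(\<Sum>v\<in>V. \<alpha> * (1 - \<alpha>) ^ k * walk_prob E k u v)
      = \<alpha> * (1 - \<alpha>) ^ k * (\<Sum>v\<in>V. walk_prob E k u v)"
    by (simp add: sum_distrib_left)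
  also have "\<dots> \<le> \<alpha> * (1 - \<alpha>) ^ k"
    using assms sum_walk_prob_le_1[OF assms(1,2)] by (intro mult_left_le) auto
  finally show "(\<Sum>v\<in>V. \<alpha> * (1 - \<alpha>) ^ k * walk_prob E k u v) \<le> \<alpha> * (1 - \<alpha>) ^ k" .
qed

lemma ppr_last_step:
  assumes "finite V" "E \<subseteq> V \<times> V" "0 < \<alpha>" "\<alpha> < 1"
  shows "ppr E \<alpha> s v
    = \<alpha> * (if s = v then 1 else 0) + (1 - \<alpha>) * (\<Sum>w\<in>V. ppr E \<alpha> s w * trans_prob E w v)"
proof -
  let ?f = "\<lambda>k. \<alpha> * (1 - \<alpha>) ^ k * walk_prob E k s v"
  have "(\<lambda>k. \<Sum>w\<in>V. \<alpha> * (1 - \<alpha>) ^ k * walk_prob E k s w * trans_prob E w v)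
      sums (\<Sum>w\<in>V. ppr E \<alpha> s w * trans_prob E w v)"
    by (rule sums_sum) (rule sums_mult2[OF ppr_sums[OF assms(3,4)]])
  from sums_mult[OF this, of "1 - \<alpha>"]
  have "(\<lambda>k. ?f (Suc k)) sums ((1 - \<alpha>) * (\<Sum>w\<in>V. ppr E \<alpha> s w * trans_prob E w v))"
    unfolding walk_prob_Suc_last_step[OF assms(1,2)]
    by (simp add: sum_distrib_left mult.assoc mult.left_commute)
  then have "?f sums ((1 - \<alpha>) * (\<Sum>w\<in>V. ppr E \<alpha> s w * trans_prob E w v) + ?f 0)"
    by (rule sums_Suc)
  from sums_unique2[OF ppr_sums[OF assms(3,4)] this] show ?thesis by simp
qed

lemma ppr_d_last_step:
  assumes "finite V" "E \<subseteq> V \<times> V" "0 < \<alpha>" "\<alpha> < 1"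
  shows "ppr_d E \<alpha> s v = \<alpha> * real (outdeg E s) * (if s = v then 1 else 0)
          + (1 - \<alpha>) * (\<Sum>w\<in>V. ppr_d E \<alpha> s w * trans_prob E w v)"
  unfolding ppr_d_def ppr_last_step[OF assms, of s v]
  by (simp add: algebra_simps sum_distrib_left)

definition ppr_d_mass :: "'a set \<Rightarrow> ('a \<times> 'a) set \<Rightarrow> real \<Rightarrow> ('a \<Rightarrow> real) \<Rightarrow> 'a \<Rightarrow> real" where
  "ppr_d_mass V E \<alpha> r s = (\<Sum>v\<in>V. ppr_d E \<alpha> s v * r v)"

lemma ppr_d_mass_nonneg:
  "0 < \<alpha> \<Longrightarrow> \<alpha> < 1 \<Longrightarrow> \<forall>v. 0 \<le> r v \<Longrightarrow> 0 \<le> ppr_d_mass V E \<alpha> r s"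
  unfolding ppr_d_mass_def ppr_d_def by (intro sum_nonneg mult_nonneg_nonneg) (auto intro: ppr_nonneg)

lemma ppr_d_mass_le:
  assumes "finite V" "E \<subseteq> V \<times> V" "0 < \<alpha>" "\<alpha> < 1" "\<forall>v\<in>V. r v \<le> c" "0 \<le> c"
  shows "ppr_d_mass V E \<alpha> r s \<le> c * real (outdeg E s)"
proof -
  have "ppr_d_mass V E \<alpha> r s \<le> (\<Sum>v\<in>V. ppr_d E \<alpha> s v * c)"
    unfolding ppr_d_mass_def using assms ppr_nonneg[OF assms(3,4)]
    by (intro sum_mono mult_left_mono) (auto simp: ppr_d_def intro!: mult_nonneg_nonneg)
  also have "\<dots> = c * real (outdeg E s) * (\<Sum>v\<in>V. ppr E \<alpha> s v)"
    by (simp add: ppr_d_def sum_distrib_left sum_distrib_right algebra_simps)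
  also have "\<dots> \<le> c * real (outdeg E s)"
    using assms sum_ppr_le_1[OF assms(1-4)] by (intro mult_left_le) auto
  finally show ?thesis .
qed

definition push_residual :: "('a \<times> 'a) set \<Rightarrow> real \<Rightarrow> ('a \<Rightarrow> real) \<Rightarrow> 'a \<Rightarrow> 'a \<Rightarrow> real" where
  "push_residual E \<alpha> r vk = (\<lambda>v. if v = vk then 0
     else r v + (if (v, vk) \<in> E then (1 - \<alpha>) * r vk / real (outdeg E v) else 0))"

definition push_estimate :: "('a \<times> 'a) set \<Rightarrow> 's set \<Rightarrow> ('s \<Rightarrow> 'a set) \<Rightarrow> real
    \<Rightarrow> ('s \<Rightarrow> real) \<Rightarrow> ('a \<Rightarrow> real) \<Rightarrow> 'a \<Rightarrow> 's \<Rightarrow> real" where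
  "push_estimate E S F \<alpha> p r vk = (\<lambda>i. if i \<in> S \<and> vk \<in> F i
     then p i + \<alpha> * real (outdeg E vk) * r vk / real (card (F i)) else p i)"

lemma gbp_step_iff_push:
  "gbp_step V E S F \<alpha> rmax st st' \<longleftrightarrow> (\<exists>vk\<in>V. rmax < snd st vk \<and>
     st' = (push_estimate E S F \<alpha> (fst st) (snd st) vk, push_residual E \<alpha> (snd st) vk))"
  unfolding gbp_step_def push_estimate_def push_residual_def ..

lemma ppr_d_mass_push:
  assumes "finite V" "E \<subseteq> V \<times> V" "0 < \<alpha>" "\<alpha> < 1" "(vk, vk) \<notin> E" "vk \<in> V"
  shows "ppr_d_mass V E \<alpha> (push_residual E \<alpha> r vk) s
       = ppr_d_mass V E \<alpha> r s - \<alpha> * real (outdeg E s) * (if s = vk then 1 else 0) * r vk"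
proof -
  have push: "push_residual E \<alpha> r vk v
      = r v + r vk * ((1 - \<alpha>) * trans_prob E v vk) - r vk * (if v = vk then 1 else 0)" for v
    using assms(5) by (auto simp: push_residual_def trans_prob_def)
  have "ppr_d_mass V E \<alpha> (push_residual E \<alpha> r vk) s
     = ppr_d_mass V E \<alpha> r s + r vk * ((1 - \<alpha>) * (\<Sum>v\<in>V. ppr_d E \<alpha> s v * trans_prob E v vk))
       - r vk * (\<Sum>v\<in>V. ppr_d E \<alpha> s v * (if v = vk then 1 else 0))"
    unfolding ppr_d_mass_def push
    by (simp add: algebra_simps sum.distrib sum_subtractf sum_distrib_left)
  also have "(\<Sum>v\<in>V. ppr_d E \<alpha> s v * (if v = vk then 1 else 0)) = ppr_d E \<alpha> s vk"
    using assms(1,6) by (simp add: if_distrib[where f="\<lambda>x. _ * x"] cong: if_cong)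
  also note ppr_d_last_step[OF assms(1-4)]
  finally show ?thesis by (simp add: algebra_simps)
qed

lemma sum_ppr_d_mass_push:
  assumes "finite V" "E \<subseteq> V \<times> V" "0 < \<alpha>" "\<alpha> < 1" "(vk, vk) \<notin> E" "vk \<in> V" "finite A"
  shows "(\<Sum>s\<in>A. ppr_d_mass V E \<alpha> (push_residual E \<alpha> r vk) s)
       = (\<Sum>s\<in>A. ppr_d_mass V E \<alpha> r s) - (if vk \<in> A then \<alpha> * real (outdeg E vk) * r vk else 0)"
  unfolding ppr_d_mass_push[OF assms(1-6)] sum_subtractf
  using assms(7)
  by (simp add: if_distrib[where f="\<lambda>x. _ * x"] if_distrib[where f="\<lambda>x. x * _"] cong: if_cong)

definition gbp_invariant :: "'a set \<Rightarrow> ('a \<times> 'a) set \<Rightarrow> 's set \<Rightarrow> ('s \<Rightarrow> 'a set) \<Rightarrow> real \<Rightarrow> 's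
    \<Rightarrow> ('s \<Rightarrow> real) \<times> ('a \<Rightarrow> real) \<Rightarrow> bool" where
  "gbp_invariant V E S F \<alpha> j st \<longleftrightarrow> (\<forall>v. 0 \<le> snd st v) \<and>
     (\<forall>i\<in>S. fst st i * real (card (F i)) + (\<Sum>s\<in>F i. ppr_d_mass V E \<alpha> (snd st) s)
            = (\<Sum>s\<in>F i. ppr_d_mass V E \<alpha> (snd (gbp_init F j)) s))"

lemma gbp_invariant_init: "gbp_invariant V E S F \<alpha> j (gbp_init F j)"
  by (auto simp: gbp_invariant_def gbp_init_def)

lemma gbp_invariant_step:
  assumes "graph_ok V E" "super_ok V S F" "0 < \<alpha>" "\<alpha> < 1"
    and step: "gbp_step V E S F \<alpha> rmax st st'" and inv: "gbp_invariant V E S F \<alpha> j st"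
  shows "gbp_invariant V E S F \<alpha> j st'"
proof -
  have V: "finite V" "E \<subseteq> V \<times> V" "\<forall>v. (v, v) \<notin> E" using assms(1) by (auto simp: graph_ok_def)
  obtain p r where st: "st = (p, r)" by fastforce
  from step obtain vk where vk: "vk \<in> V"
    and st': "st' = (push_estimate E S F \<alpha> p r vk, push_residual E \<alpha> r vk)"
    unfolding gbp_step_iff_push st by auto
  have r_nonneg: "\<forall>v. 0 \<le> r v" using inv st by (simp add: gbp_invariant_def)
  have "\<forall>v. 0 \<le> push_residual E \<alpha> r vk v"
    using r_nonneg assms(4) by (auto simp: push_residual_def intro!: add_nonneg_nonneg divide_nonneg_nonneg)
  moreover have "push_estimate E S F \<alpha> p r vk i * real (card (F i))
      + (\<Sum>s\<in>F i. ppr_d_mass V E \<alpha> (push_residual E \<alpha> r vk) s)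
      = p i * real (card (F i)) + (\<Sum>s\<in>F i. ppr_d_mass V E \<alpha> r s)" if i: "i \<in> S" for i
  proof -
    have Fi: "finite (F i)" "card (F i) \<noteq> 0"
      using assms(2) i V(1) by (auto simp: super_ok_def finite_subset card_eq_0_iff)
    show ?thesis
      unfolding sum_ppr_d_mass_push[OF V(1,2) assms(3,4) V(3)[rule_format] vk Fi(1)] using Fi(2) i
      by (simp add: push_estimate_def field_simps)
  qed
  ultimately show ?thesis using inv unfolding gbp_invariant_def st st' by simp
qed

lemma gbp_total_mass_step:
  assumes "graph_ok V E" "0 < \<alpha>" "\<alpha> < 1"
    and step: "gbp_step V E S F \<alpha> rmax st st'" and r_nonneg: "\<forall>v. 0 \<le> snd st v"
  shows "(\<Sum>u\<in>V. ppr_d_mass V E \<alpha> (snd st') u) \<le> (\<Sum>u\<in>V. ppr_d_mass V E \<alpha> (snd st) u) - \<alpha> * rmax"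
proof -
  have V: "finite V" "E \<subseteq> V \<times> V" "\<forall>v. (v, v) \<notin> E" "\<forall>v\<in>V. 1 \<le> outdeg E v"
    using assms(1) by (auto simp: graph_ok_def)
  from step obtain vk where vk: "vk \<in> V" "rmax < snd st vk"
    and r': "snd st' = push_residual E \<alpha> (snd st) vk"
    unfolding gbp_step_iff_push by auto
  have "rmax \<le> real (outdeg E vk) * snd st vk"
    using vk V(4) r_nonneg mult_right_mono[of 1 "real (outdeg E vk)" "snd st vk"] by force
  then have "\<alpha> * rmax \<le> \<alpha> * real (outdeg E vk) * snd st vk"
    using assms(2) by (simp add: mult.assoc)
  then show ?thesis
    unfolding r' using sum_ppr_d_mass_push[OF V(1,2) assms(2,3) _ vk(1) V(1)] V(3) vk(1) by simp
qed

lemma no_infinite_chain_if_potential_decreases: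
  fixes \<Phi> :: "'b \<Rightarrow> real"
  assumes "\<And>x y. step x y \<Longrightarrow> I x \<Longrightarrow> I y \<and> \<Phi> y \<le> \<Phi> x - c"
    and "\<And>x. I x \<Longrightarrow> 0 \<le> \<Phi> x" and "0 < c" and "I x0"
  shows "\<nexists>f. f 0 = x0 \<and> (\<forall>n. step (f n) (f (Suc n)))"
proof
  assume "\<exists>f. f 0 = x0 \<and> (\<forall>n. step (f n) (f (Suc n)))"
  then obtain f where f0: "f 0 = x0" and f: "\<And>n. step (f n) (f (Suc n))" by blast
  have descent: "I (f n) \<and> \<Phi> (f n) \<le> \<Phi> x0 - real n * c" for n
  proof (induction n)
    case (Suc n)
    with assms(1)[OF f[of n]] show ?case by (auto simp: algebra_simps)
  qed (use f0 assms(4) in simp)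
  obtain n where "\<Phi> x0 / c < real n" using reals_Archimedean2 by blast
  then have "\<Phi> x0 < real n * c" using assms(3) by (simp add: pos_divide_less_eq)
  with descent[of n] assms(2)[of "f n"] show False by linarith
qed

lemma gbp_terminates:
  assumes "graph_ok V E" "super_ok V S F" "0 < \<alpha>" "\<alpha> < 1" "0 < rmax"
  shows "\<nexists>f. f 0 = gbp_init F j \<and> (\<forall>n. gbp_step V E S F \<alpha> rmax (f n) (f (Suc n)))"
proof (rule no_infinite_chain_if_potential_decreases)
  let ?I = "gbp_invariant V E S F \<alpha> j"
  show "?I st' \<and> (\<Sum>u\<in>V. ppr_d_mass V E \<alpha> (snd st') u)
      \<le> (\<Sum>u\<in>V. ppr_d_mass V E \<alpha> (snd st) u) - \<alpha> * rmax"
    if "gbp_step V E S F \<alpha> rmax st st'" "?I st" for st st'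
    using gbp_invariant_step[OF assms(1-4) that] that(2) gbp_total_mass_step[OF assms(1,3,4) that(1)]
    by (simp add: gbp_invariant_def)
  show "0 \<le> (\<Sum>u\<in>V. ppr_d_mass V E \<alpha> (snd st) u)" if "?I st" for st
    using that unfolding gbp_invariant_def
    by (intro sum_nonneg ppr_d_mass_nonneg[OF assms(3,4)]) simp
qed (use assms(3,5) gbp_invariant_init in simp_all)

lemma ppr_d_super_eq_init_mass:
  assumes "finite V" "F j \<subseteq> V"
  shows "ppr_d_super E \<alpha> F i j
       = (\<Sum>s\<in>F i. ppr_d_mass V E \<alpha> (snd (gbp_init F j)) s) / real (card (F i))"
proof -
  have "ppr_d_mass V E \<alpha> (snd (gbp_init F j)) s = (\<Sum>t\<in>F j. ppr_d E \<alpha> s t) / real (card (F j))" for s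
  proof -
    have "ppr_d_mass V E \<alpha> (snd (gbp_init F j)) s
        = (\<Sum>v\<in>V. if v \<in> F j then ppr_d E \<alpha> s v / real (card (F j)) else 0)"
      unfolding ppr_d_mass_def gbp_init_def by (intro sum.cong) auto
    also have "\<dots> = (\<Sum>v\<in>F j. ppr_d E \<alpha> s v / real (card (F j)))"
      using assms by (simp add: sum.inter_restrict[symmetric] Int_absorb1)
    finally show ?thesis by (simp add: sum_divide_distrib)
  qed
  then show ?thesis
    unfolding ppr_d_super_def by (simp add: sum_divide_distrib mult.commute)
qed

lemma gbp_terminal_error_bounds:
  assumes "graph_ok V E" "super_ok V S F" "0 < \<alpha>" "\<alpha> < 1" "i \<in> S" "j \<in> S" "0 \<le> rmax"
    and inv: "gbp_invariant V E S F \<alpha> j st" and terminal: "gbp_terminal V rmax st"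
  shows "0 \<le> ppr_d_super E \<alpha> F i j - fst st i"
    and "ppr_d_super E \<alpha> F i j - fst st i
         \<le> rmax * ((\<Sum>s\<in>F i. real (outdeg E s)) / real (card (F i)))"
proof -
  have V: "finite V" "E \<subseteq> V \<times> V" using assms(1) by (auto simp: graph_ok_def)
  have Fi: "F i \<subseteq> V" "finite (F i)" "0 < real (card (F i))"
    using assms(2,5) V(1) by (auto simp: super_ok_def finite_subset card_gt_0_iff)
  have r_nonneg: "\<forall>v. 0 \<le> snd st v" and r_le: "\<forall>v\<in>V. snd st v \<le> rmax"
    using inv terminal by (auto simp: gbp_invariant_def gbp_terminal_def not_less)
  have "fst st i * real (card (F i)) + (\<Sum>s\<in>F i. ppr_d_mass V E \<alpha> (snd st) s)
      = (\<Sum>s\<in>F i. ppr_d_mass V E \<alpha> (snd (gbp_init F j)) s)"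
    using inv assms(5) by (simp add: gbp_invariant_def)
  then have gap: "ppr_d_super E \<alpha> F i j - fst st i
      = (\<Sum>s\<in>F i. ppr_d_mass V E \<alpha> (snd st) s) / real (card (F i))"
    using Fi(3) assms(2,6) V(1)
    by (simp add: ppr_d_super_eq_init_mass super_ok_def field_simps)
  show "0 \<le> ppr_d_super E \<alpha> F i j - fst st i"
    unfolding gap using ppr_d_mass_nonneg[OF assms(3,4) r_nonneg]
    by (intro divide_nonneg_nonneg sum_nonneg) auto
  have "(\<Sum>s\<in>F i. ppr_d_mass V E \<alpha> (snd st) s) \<le> (\<Sum>s\<in>F i. rmax * real (outdeg E s))"
    using ppr_d_mass_le[OF V assms(3,4) r_le assms(7)] by (intro sum_mono) auto
  then show "ppr_d_super E \<alpha> F i j - fst st i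
      \<le> rmax * ((\<Sum>s\<in>F i. real (outdeg E s)) / real (card (F i)))"
    unfolding gap using Fi(3) by (simp add: sum_distrib_left divide_right_mono)
qed

lemma eps_delta_approx_of_underestimate:
  "0 \<le> \<epsilon> \<Longrightarrow> 0 \<le> x - xhat \<Longrightarrow> x - xhat \<le> \<epsilon> * \<delta> \<Longrightarrow> eps_delta_approx \<epsilon> \<delta> xhat x"
  unfolding eps_delta_approx_def
  by (smt (verit) mult_left_mono)

lemma avg_outdeg_pos:
  assumes "graph_ok V E" "super_ok V S F" "i \<in> S"
  shows "0 < (\<Sum>s\<in>F i. real (outdeg E s)) / real (card (F i))"
proof -
  have Fi: "F i \<subseteq> V" "finite (F i)" "F i \<noteq> {}"
    using assms by (auto simp: super_ok_def graph_ok_def finite_subset)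
  have "\<forall>s\<in>F i. 1 \<le> outdeg E s" using assms(1) Fi(1) by (auto simp: graph_ok_def)
  then have "0 < (\<Sum>s\<in>F i. real (outdeg E s))"
    using Fi by (intro sum_pos) auto
  then show ?thesis using Fi by (simp add: card_gt_0_iff)
qed

theorem lemma3:
  fixes V :: "'a set" and E :: "('a \<times> 'a) set" and S :: "'s set" and F :: "'s \<Rightarrow> 'a set"
    and \<alpha> \<epsilon> \<delta> rmax :: real and j :: 's
  assumes "graph_ok V E"
    and "0 < \<alpha>" and "\<alpha> < 1"
    and "super_ok V S F"
    and "card S \<ge> 2"
    and "\<epsilon> > 0" and "\<delta> > 0"
    and "j \<in> S"
    and "rmax = \<epsilon> * \<delta> /
           Max ((\<lambda>i. (\<Sum>vs\<in>F i. real (outdeg E vs)) / real (card (F i))) ` (S - {j}))"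
  shows "(\<nexists>f. f 0 = gbp_init F j \<and> (\<forall>n. gbp_step V E S F \<alpha> rmax (f n) (f (Suc n))))
    \<and> (\<forall>st. (gbp_step V E S F \<alpha> rmax)\<^sup>*\<^sup>* (gbp_init F j) st \<and> gbp_terminal V rmax st \<longrightarrow>
          (\<forall>i\<in>S - {j}. eps_delta_approx \<epsilon> \<delta> (fst st i) (ppr_d_super E \<alpha> F i j)))"
proof -
  let ?avg = "\<lambda>i. (\<Sum>vs\<in>F i. real (outdeg E vs)) / real (card (F i))"
  define M where "M = Max (?avg ` (S - {j}))"
  have fin: "finite (S - {j})" and "S - {j} \<noteq> {}"
    using assms(4,5) card_mono[of "{j}" S] by (auto simp: super_ok_def)
  then obtain i0 where i0: "i0 \<in> S - {j}" by blast
  have avg_le_M: "?avg i \<le> M" if "i \<in> S - {j}" for i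
    using fin that by (simp add: M_def)
  with i0 avg_outdeg_pos[OF assms(1,4)] have "0 < M"
    by (meson DiffD1 order_less_le_trans)
  then have rmax: "0 < rmax" "rmax * M = \<epsilon> * \<delta>" using assms(6,7,9) by (simp_all add: M_def)
  let ?step = "gbp_step V E S F \<alpha> rmax"
  have invariant: "gbp_invariant V E S F \<alpha> j st" if "?step\<^sup>*\<^sup>* (gbp_init F j) st" for st
    using that by (induction rule: rtranclp_induct)
      (auto intro: gbp_invariant_init gbp_invariant_step[OF assms(1,4,2,3)])
  show ?thesis
  proof (intro conjI allI impI ballI)
    show "\<nexists>f. f 0 = gbp_init F j \<and> (\<forall>n. ?step (f n) (f (Suc n)))"
      using gbp_terminates[OF assms(1,4,2,3) rmax(1)] .
  next
    fix st i
    assume st: "?step\<^sup>*\<^sup>* (gbp_init F j) st \<and> gbp_terminal V rmax st" and i: "i \<in> S - {j}"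
    note gbp_terminal_error_bounds[OF assms(1,4,2,3) DiffD1[OF i] assms(8)
        less_imp_le[OF rmax(1)] invariant[OF conjunct1[OF st]] conjunct2[OF st]]
    moreover have "rmax * ?avg i \<le> \<epsilon> * \<delta>"
      using avg_le_M[OF i] rmax by (metis mult_left_mono less_imp_le)
    ultimately show "eps_delta_approx \<epsilon> \<delta> (fst st i) (ppr_d_super E \<alpha> F i j)"
      using assms(6) by (intro eps_delta_approx_of_underestimate) (auto intro: order_trans)
  qed
qed

end
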